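(* For every integer $k\ge 2$, there exists a connected twin-free graph $G$ with $n=2^{k-1}+k-2$ vertices for which $i_{\max}(G)=k$.
   Context: $i_{\max}(G)$ denotes the number of maximal independent sets of $G$. A graph is twin-free if no two vertices have the same open neighbourhood. *)

theory Defs
  imports Main
begin

definition simple_graph :: "'a set \<Rightarrow> ('a \<Rightarrow> 'a \<Rightarrow> bool) \<Rightarrow> bool" where
  "simple_graph V E \<longleftrightarrow> finite V \<and> (\<forall>u v. E u v \<longrightarrow> u \<in> V \<and> v \<in> V)
     \<and> (\<forall>u v. E u v \<longrightarrow> E v u) \<and> (\<forall>v. \<not> E v v)"

definition open_nbhd :: "'a set \<Rightarrow> ('a \<Rightarrow> 'a \<Rightarrow> bool) \<Rightarrow> 'a \<Rightarrow> 'a set" where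
  "open_nbhd V E v = {u \<in> V. E v u}"

definition connected_graph :: "'a set \<Rightarrow> ('a \<Rightarrow> 'a \<Rightarrow> bool) \<Rightarrow> bool" where
  "connected_graph V E \<longleftrightarrow> V \<noteq> {} \<and>
     (\<forall>u\<in>V. \<forall>v\<in>V. (\<lambda>x y. E x y)\<^sup>*\<^sup>* u v)"

definition twin_free :: "'a set \<Rightarrow> ('a \<Rightarrow> 'a \<Rightarrow> bool) \<Rightarrow> bool" where
  "twin_free V E \<longleftrightarrow> (\<forall>u\<in>V. \<forall>v\<in>V. u \<noteq> v \<longrightarrow> open_nbhd V E u \<noteq> open_nbhd V E v)"

definition independent_set :: "'a set \<Rightarrow> ('a \<Rightarrow> 'a \<Rightarrow> bool) \<Rightarrow> 'a set \<Rightarrow> bool" where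
  "independent_set V E S \<longleftrightarrow> S \<subseteq> V \<and> (\<forall>u\<in>S. \<forall>v\<in>S. \<not> E u v)"

definition maximal_independent_set :: "'a set \<Rightarrow> ('a \<Rightarrow> 'a \<Rightarrow> bool) \<Rightarrow> 'a set \<Rightarrow> bool" where
  "maximal_independent_set V E S \<longleftrightarrow> independent_set V E S \<and>
     (\<forall>T. independent_set V E T \<and> S \<subseteq> T \<longrightarrow> T = S)"

definition i_max :: "'a set \<Rightarrow> ('a \<Rightarrow> 'a \<Rightarrow> bool) \<Rightarrow> nat" where
  "i_max V E = card {S. maximal_independent_set V E S}"

end

(* Take the split graph whose clique is {0, ..., m - 1} and whose independent side consists of
   the 2^m - 1 nonempty subsets of it, each subset joined to its elements.  An independent set
   contains at most one clique vertex c; a maximal one is either c together with all subsets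
   avoiding c, or, if it contains no clique vertex, the whole independent side.  So there are
   m + 1 maximal independent sets on 2^m - 1 + m vertices, and m = k - 1 gives the theorem.
   Distinct subsets have distinct neighbourhoods, two clique vertices are adjacent and hence not
   twins, and a clique vertex sees a subset that no subset sees: the graph is twin-free.  It is
   connected because every subset is nonempty. *)
theory Submission
  imports Defs
begin

definition split_edges :: "'a set \<Rightarrow> 'a set \<Rightarrow> ('a \<Rightarrow> 'a \<Rightarrow> bool) \<Rightarrow> 'a \<Rightarrow> 'a \<Rightarrow> bool" where
  "split_edges B C adj u v \<longleftrightarrow>
     (u \<in> C \<and> v \<in> C \<and> u \<noteq> v) \<or> (u \<in> B \<and> v \<in> C \<and> adj u v) \<or> (u \<in> C \<and> v \<in> B \<and> adj v u)"

definition clique_vertex_mis :: "'a set \<Rightarrow> ('a \<Rightarrow> 'a \<Rightarrow> bool) \<Rightarrow> 'a \<Rightarrow> 'a set" where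
  "clique_vertex_mis B adj c = insert c {b \<in> B. \<not> adj b c}"

lemma simple_graph_split_edges:
  assumes "finite B" "finite C" "B \<inter> C = {}"
  shows "simple_graph (B \<union> C) (split_edges B C adj)"
  using assms by (auto simp: simple_graph_def split_edges_def)

lemma independent_set_split_edges_iff:
  assumes "B \<inter> C = {}"
  shows "independent_set (B \<union> C) (split_edges B C adj) S \<longleftrightarrow>
    S \<subseteq> B \<union> C \<and> (\<forall>c\<in>S \<inter> C. S \<subseteq> clique_vertex_mis B adj c)"
  using assms unfolding independent_set_def split_edges_def clique_vertex_mis_def
  by (auto 4 3 dest: bspec)

lemma clique_vertex_mis_Int_clique:
  "B \<inter> C = {} \<Longrightarrow> c \<in> C \<Longrightarrow> clique_vertex_mis B adj c \<inter> C = {c}"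
  by (auto simp: clique_vertex_mis_def)

lemma maximal_independent_set_split_edges_independent_side:
  assumes disj: "B \<inter> C = {}" and covered: "\<forall>c\<in>C. \<exists>b\<in>B. adj b c"
  shows "maximal_independent_set (B \<union> C) (split_edges B C adj) B"
  unfolding maximal_independent_set_def independent_set_split_edges_iff[OF disj]
proof (intro conjI allI impI)
  fix S assume S: "(S \<subseteq> B \<union> C \<and> (\<forall>c\<in>S \<inter> C. S \<subseteq> clique_vertex_mis B adj c)) \<and> B \<subseteq> S"
  have "S \<inter> C = {}"
  proof (rule ccontr)
    assume "S \<inter> C \<noteq> {}"
    then obtain c where c: "c \<in> S \<inter> C" by blast
    then obtain b where b: "b \<in> B" "adj b c" using covered by blast
    then have "b \<in> clique_vertex_mis B adj c" using S c by blast
    then show False using b c disj by (auto simp: clique_vertex_mis_def)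
  qed
  then show "S = B" using S by blast
qed (use disj in auto)

lemma maximal_independent_set_clique_vertex_mis:
  assumes disj: "B \<inter> C = {}" and "c \<in> C"
  shows "maximal_independent_set (B \<union> C) (split_edges B C adj) (clique_vertex_mis B adj c)"
  using assms clique_vertex_mis_Int_clique[OF assms]
  by (auto simp: maximal_independent_set_def independent_set_split_edges_iff[OF disj]
      clique_vertex_mis_def)

lemma maximal_independent_sets_split_edges:
  assumes disj: "B \<inter> C = {}" and covered: "\<forall>c\<in>C. \<exists>b\<in>B. adj b c"
  shows "{S. maximal_independent_set (B \<union> C) (split_edges B C adj) S}
    = insert B (clique_vertex_mis B adj ` C)"
proof -
  note indep_iff = independent_set_split_edges_iff[OF disj]
  have "S \<in> insert B (clique_vertex_mis B adj ` C)"
    if S: "maximal_independent_set (B \<union> C) (split_edges B C adj) S" for S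
  proof (cases "S \<inter> C = {}")
    case True
    then have "S \<subseteq> B" using S by (auto simp: maximal_independent_set_def indep_iff)
    then show ?thesis
      using S maximal_independent_set_split_edges_independent_side[OF disj covered]
      by (auto simp: maximal_independent_set_def)
  next
    case False
    then obtain c where c: "c \<in> S \<inter> C" by blast
    then have "S \<subseteq> clique_vertex_mis B adj c"
      using S by (auto simp: maximal_independent_set_def indep_iff)
    moreover have "maximal_independent_set (B \<union> C) (split_edges B C adj) (clique_vertex_mis B adj c)"
      using c by (intro maximal_independent_set_clique_vertex_mis[OF disj]) blast
    ultimately have "S = clique_vertex_mis B adj c"
      using S by (auto simp: maximal_independent_set_def)
    then show ?thesis
      using c by blast
  qed
  then show ?thesis
    using maximal_independent_set_split_edges_independent_side[OF disj covered]
      maximal_independent_set_clique_vertex_mis[OF disj] by blast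
qed

lemma i_max_split_edges:
  assumes "finite C" "B \<inter> C = {}" "\<forall>c\<in>C. \<exists>b\<in>B. adj b c"
  shows "i_max (B \<union> C) (split_edges B C adj) = card C + 1"
proof -
  have "inj_on (clique_vertex_mis B adj) C"
    by (rule inj_onI) (metis clique_vertex_mis_Int_clique[OF assms(2)] singleton_inject)
  moreover have "B \<notin> clique_vertex_mis B adj ` C"
    using assms(2) by (auto simp: clique_vertex_mis_def)
  ultimately show ?thesis
    using assms by (simp add: i_max_def maximal_independent_sets_split_edges card_image)
qed

lemma open_nbhd_split_edges:
  assumes "B \<inter> C = {}"
  shows "b \<in> B \<Longrightarrow> open_nbhd (B \<union> C) (split_edges B C adj) b = {c \<in> C. adj b c}"
    and "c \<in> C \<Longrightarrow> open_nbhd (B \<union> C) (split_edges B C adj) c = (C - {c}) \<union> {b \<in> B. adj b c}"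
  using assms by (auto simp: open_nbhd_def split_edges_def)

lemma twin_free_split_edges:
  assumes disj: "B \<inter> C = {}" and covered: "\<forall>c\<in>C. \<exists>b\<in>B. adj b c"
    and distinct_nbhds: "inj_on (\<lambda>b. {c \<in> C. adj b c}) B"
  shows "twin_free (B \<union> C) (split_edges B C adj)"
proof -
  let ?N = "open_nbhd (B \<union> C) (split_edges B C adj)"
  have not_twins: "?N u \<noteq> ?N v" if "u \<in> B \<union> C" "v \<in> B \<union> C" "u \<noteq> v" "u \<in> B \<or> v \<in> C" for u v
  proof (cases "u \<in> B")
    case u: True
    show ?thesis
    proof (cases "v \<in> B")
      case True
      then show ?thesis
        using u \<open>u \<noteq> v\<close> inj_onD[OF distinct_nbhds] by (metis open_nbhd_split_edges(1)[OF disj])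
    next
      case False
      then have v: "v \<in> C" using that by blast
      then obtain b where "b \<in> B" "adj b v" using covered by blast
      then have "b \<in> ?N v" "b \<notin> ?N u"
        using u v disj by (auto simp: open_nbhd_split_edges[OF disj])
      then show ?thesis by blast
    qed
  next
    case False
    then have "u \<in> C" "v \<in> C" using that by blast+
    then have "v \<in> ?N u" "v \<notin> ?N v"
      using \<open>u \<noteq> v\<close> disj by (auto simp: open_nbhd_split_edges[OF disj])
    then show ?thesis by blast
  qed
  show ?thesis
    unfolding twin_free_def
  proof (intro ballI impI)
    fix u v assume "u \<in> B \<union> C" "v \<in> B \<union> C" "u \<noteq> v"
    then show "?N u \<noteq> ?N v"
      using not_twins[of u v] not_twins[of v u] by blast
  qed
qed

lemma connected_split_edges:
  assumes "C \<noteq> {}" and dominated: "\<forall>b\<in>B. \<exists>c\<in>C. adj b c"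
  shows "connected_graph (B \<union> C) (split_edges B C adj)"
proof -
  let ?R = "split_edges B C adj"
  obtain c\<^sub>0 where c\<^sub>0: "c\<^sub>0 \<in> C" using assms(1) by blast
  have to_c\<^sub>0: "?R\<^sup>*\<^sup>* u c\<^sub>0" if "u \<in> B \<union> C" for u
  proof (cases "u \<in> C")
    case True
    then have "u = c\<^sub>0 \<or> ?R u c\<^sub>0" using c\<^sub>0 by (auto simp: split_edges_def)
    then show ?thesis by auto
  next
    case False
    then have "u \<in> B" using that by blast
    then obtain c where c: "c \<in> C" "adj u c" using dominated by blast
    then have "?R u c"
      using \<open>u \<in> B\<close> by (simp add: split_edges_def)
    moreover have "?R\<^sup>*\<^sup>* c c\<^sub>0"
      using c c\<^sub>0 by (cases "c = c\<^sub>0") (auto simp: split_edges_def)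
    ultimately show ?thesis by (rule converse_rtranclp_into_rtranclp)
  qed
  have sym: "symp ?R\<^sup>*\<^sup>*"
    by (rule symp_rtranclp) (auto simp: symp_def split_edges_def)
  have "?R\<^sup>*\<^sup>* u v" if "u \<in> B \<union> C" "v \<in> B \<union> C" for u v
    using to_c\<^sub>0[OF that(1)] sympD[OF sym to_c\<^sub>0[OF that(2)]] by (rule rtranclp_trans)
  then show ?thesis
    using c\<^sub>0 by (auto simp: connected_graph_def)
qed

lemma bit_nat_less_exp: "(b::nat) < 2 ^ m \<Longrightarrow> bit b n \<Longrightarrow> n < m"
  by (metis bit_take_bit_iff take_bit_nat_eq_self_iff)

lemma nat_nonzero_has_bit: "(b::nat) \<noteq> 0 \<Longrightarrow> \<exists>n. bit b n"
  using bit_eq_iff[of b 0] by simp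

text \<open>A nonempty subset of \<open>{0..<m}\<close> is the vertex given by its bitmask in \<open>{1..<2^m}\<close>;
  the element \<open>i\<close> is the vertex \<open>2^m + i\<close>.\<close>
definition mask_vertices :: "nat \<Rightarrow> nat set" where
  "mask_vertices m = {1..<2 ^ m}"

definition index_vertices :: "nat \<Rightarrow> nat set" where
  "index_vertices m = {2 ^ m..<2 ^ m + m}"

definition mask_has_index :: "nat \<Rightarrow> nat \<Rightarrow> nat \<Rightarrow> bool" where
  "mask_has_index m b c \<longleftrightarrow> bit b (c - 2 ^ m)"

lemma mask_index_vertices_disjoint: "mask_vertices m \<inter> index_vertices m = {}"
  by (auto simp: mask_vertices_def index_vertices_def)

lemma card_mask_index_vertices: "card (mask_vertices m \<union> index_vertices m) = 2 ^ m + m - 1"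
  unfolding mask_vertices_def index_vertices_def
  by (subst ivl_disj_un_two(3)) simp_all

lemma index_vertex_has_mask:
  assumes "c \<in> index_vertices m"
  shows "\<exists>b\<in>mask_vertices m. mask_has_index m b c"
proof
  show "2 ^ (c - 2 ^ m) \<in> mask_vertices m"
    using assms by (auto simp: mask_vertices_def index_vertices_def)
qed (simp add: mask_has_index_def bit_exp_iff)

lemma mask_vertex_has_index:
  assumes "b \<in> mask_vertices m"
  shows "\<exists>c\<in>index_vertices m. mask_has_index m b c"
proof -
  have "b \<noteq> 0"
    using assms by (simp add: mask_vertices_def)
  then obtain n where n: "bit b n"
    using nat_nonzero_has_bit by blast
  then have "n < m"
    using assms bit_nat_less_exp by (auto simp: mask_vertices_def)
  then have "2 ^ m + n \<in> index_vertices m"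
    by (simp add: index_vertices_def)
  moreover have "mask_has_index m b (2 ^ m + n)"
    using n by (simp add: mask_has_index_def)
  ultimately show ?thesis by blast
qed

lemma inj_on_mask_indices:
  "inj_on (\<lambda>b. {c \<in> index_vertices m. mask_has_index m b c}) (mask_vertices m)"
proof (rule inj_onI)
  fix b b' assume b: "b \<in> mask_vertices m" and b': "b' \<in> mask_vertices m"
    and same: "{c \<in> index_vertices m. mask_has_index m b c} = {c \<in> index_vertices m. mask_has_index m b' c}"
  have "bit b n \<longleftrightarrow> bit b' n" if "n < m" for n
    using that same[THEN eqset_imp_iff, of "2 ^ m + n"]
    by (simp add: index_vertices_def mask_has_index_def)
  moreover have "\<not> bit b n \<and> \<not> bit b' n" if "m \<le> n" for n
    using that b b' bit_nat_less_exp by (fastforce simp: mask_vertices_def)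
  ultimately show "b = b'"
    by (metis bit_eq_iff not_le)
qed

theorem proposition2p1:
  fixes k :: nat
  assumes "k \<ge> 2"
  shows "\<exists>(V :: nat set) E. simple_graph V E \<and> connected_graph V E \<and> twin_free V E
           \<and> card V = 2 ^ (k - 1) + k - 2 \<and> i_max V E = k"
proof -
  define m where "m = k - 1"
  let ?B = "mask_vertices m" and ?C = "index_vertices m"
  let ?E = "split_edges ?B ?C (mask_has_index m)"
  note disj = mask_index_vertices_disjoint[of m]
  have covered: "\<forall>c\<in>?C. \<exists>b\<in>?B. mask_has_index m b c"
    using index_vertex_has_mask by blast
  have dominated: "\<forall>b\<in>?B. \<exists>c\<in>?C. mask_has_index m b c"
    using mask_vertex_has_index by blast
  have "simple_graph (?B \<union> ?C) ?E"
    using disj by (intro simple_graph_split_edges) (simp_all add: mask_vertices_def index_vertices_def)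
  moreover have "connected_graph (?B \<union> ?C) ?E"
    using assms dominated by (intro connected_split_edges) (auto simp: index_vertices_def m_def)
  moreover have "twin_free (?B \<union> ?C) ?E"
    using disj covered inj_on_mask_indices by (rule twin_free_split_edges)
  moreover have "card (?B \<union> ?C) = 2 ^ (k - 1) + k - 2"
    using assms by (simp add: card_mask_index_vertices m_def)
  moreover have "i_max (?B \<union> ?C) ?E = k"
    using assms disj covered by (simp add: i_max_split_edges index_vertices_def m_def)
  ultimately show ?thesis by blast
qed

end
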